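(* For every constant $\alpha$ with $0<\alpha<1$ and every function $p=p(n)\ge n^{\alpha-1}$, asymptotically almost surely the random graph $G(n,p)$ is a $\sqrt[5]{np}$-expander.
   Context: $G(n,p)$ is the binomial random graph on $n$ vertices, each pair being an edge independently with probability $p$; asymptotically almost surely means with probability tending to $1$ as $n\to\infty$. For $A\subseteq V(G)$, $N(A)$ is the set of vertices outside $A$ with a neighbor in $A$. $G$ satisfies $S(s,g)$ if every $A$ with $|A|\le g$ has $|N(A)|\ge s|A|$; $G$ satisfies $L(l)$ if there is an edge between any two disjoint vertex sets of size at least $l$ each. An $n$-vertex graph is an $s$-expander if it satisfies $S\left(s,\frac{4n\ln s}{s\ln n}\right)$ and $L\left(\frac{n\ln s}{3000\ln n}\right)$. *)

theory Defs
  imports Complex_Main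
begin

text \<open>Graphs on the vertex set {0..<n}; an edge set is a set of 2-element vertex sets.\<close>

definition all_pairs :: "nat \<Rightarrow> nat set set" where
  "all_pairs n = {e. \<exists>u v. e = {u, v} \<and> u \<noteq> v \<and> u < n \<and> v < n}"

text \<open>Probability that the binomial random graph G(n,p) has property P:
  each of the pairs is an edge independently with probability p.\<close>

definition prob_Gnp :: "nat \<Rightarrow> real \<Rightarrow> (nat set set \<Rightarrow> bool) \<Rightarrow> real" where
  "prob_Gnp n p P =
     (\<Sum>E\<in>Pow (all_pairs n). if P E
        then p ^ card E * (1 - p) ^ (card (all_pairs n) - card E) else 0)"

definition nbhd :: "nat \<Rightarrow> nat set set \<Rightarrow> nat set \<Rightarrow> nat set" where
  "nbhd n E A = {v \<in> {0..<n} - A. \<exists>u\<in>A. {u, v} \<in> E}"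

definition prop_S :: "nat \<Rightarrow> nat set set \<Rightarrow> real \<Rightarrow> real \<Rightarrow> bool" where
  "prop_S n E s g \<longleftrightarrow>
     (\<forall>A. A \<subseteq> {0..<n} \<and> real (card A) \<le> g \<longrightarrow> real (card (nbhd n E A)) \<ge> s * real (card A))"

definition prop_L :: "nat \<Rightarrow> nat set set \<Rightarrow> real \<Rightarrow> bool" where
  "prop_L n E l \<longleftrightarrow>
     (\<forall>X Y. X \<subseteq> {0..<n} \<and> Y \<subseteq> {0..<n} \<and> X \<inter> Y = {} \<and>
            real (card X) \<ge> l \<and> real (card Y) \<ge> l \<longrightarrow> (\<exists>x\<in>X. \<exists>y\<in>Y. {x, y} \<in> E))"

definition is_expander :: "nat \<Rightarrow> nat set set \<Rightarrow> real \<Rightarrow> bool" where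
  "is_expander n E s \<longleftrightarrow>
     prop_S n E s (4 * real n * ln s / (s * ln (real n))) \<and>
     prop_L n E (real n * ln s / (3000 * ln (real n)))"

end

theory Submission
  imports Defs "HOL-Real_Asymp.Real_Asymp"
begin

text \<open>Both expansion properties can only fail if some pair of disjoint vertex sets X, Y spans
  no edge, which happens with probability (1 - p)^(|X||Y|) \<le> exp (-p|X||Y|).
  If S(s, g) fails at a set A of size a \<le> g, then A and the vertices outside A \<union> N(A) form such
  a pair with |X||Y| \<ge> an/10, and there are at most (n+1)^((1+s)a) choices of (A, N(A)); since
  s^5 = np \<ge> n^\<alpha>, the union bound over all a is at most n exp(-np/20).
  If L(l) fails, one of at most 4^n pairs of sets of size at least l \<ge> \<alpha>n/15000 spans no edge,
  which has probability at most 4^n exp(-p l^2) \<le> 4^n exp(-c n^(1+\<alpha>)).\<close>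

lemma sum_Pow_binomial_weights:
  fixes p :: real
  assumes "finite S"
  shows "(\<Sum>E\<in>Pow S. p ^ card E * (1 - p) ^ (card S - card E)) = 1"
proof -
  have "(\<Prod>x\<in>S. p + (1 - p)) = (\<Sum>X\<in>Pow S. (\<Prod>x\<in>X. p) * (\<Prod>x\<in>S - X. 1 - p))"
    by (rule prod_add[OF assms])
  also have "\<dots> = (\<Sum>E\<in>Pow S. p ^ card E * (1 - p) ^ (card S - card E))"
  proof (rule sum.cong)
    fix X assume "X \<in> Pow S"
    then have "card (S - X) = card S - card X"
      using assms by (simp add: card_Diff_subset finite_subset)
    then show "(\<Prod>x\<in>X. p) * (\<Prod>x\<in>S - X. 1 - p) = p ^ card X * (1 - p) ^ (card S - card X)"
      by simp
  qed simp
  finally show ?thesis by simp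
qed

lemma finite_all_pairs: "finite (all_pairs n)"
proof -
  have "all_pairs n \<subseteq> Pow {0..<n}" unfolding all_pairs_def by auto
  then show ?thesis by (rule finite_subset) simp
qed

lemma prob_Gnp_True: "prob_Gnp n p (\<lambda>_. True) = 1"
  unfolding prob_Gnp_def using sum_Pow_binomial_weights[OF finite_all_pairs] by simp

lemma prob_Gnp_not: "prob_Gnp n p (\<lambda>E. \<not> P E) = 1 - prob_Gnp n p P"
proof -
  have "prob_Gnp n p P + prob_Gnp n p (\<lambda>E. \<not> P E) = prob_Gnp n p (\<lambda>_. True)"
    unfolding prob_Gnp_def sum.distrib[symmetric] by (rule sum.cong) auto
  then show ?thesis using prob_Gnp_True[of n p] by simp
qed

lemma prob_Gnp_mono:
  assumes "0 \<le> p" "p \<le> 1" and "\<And>E. E \<subseteq> all_pairs n \<Longrightarrow> P E \<Longrightarrow> Q E"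
  shows "prob_Gnp n p P \<le> prob_Gnp n p Q"
  unfolding prob_Gnp_def by (rule sum_mono) (use assms in auto)

lemma prob_Gnp_nonneg:
  assumes "0 \<le> p" "p \<le> 1"
  shows "0 \<le> prob_Gnp n p P"
  unfolding prob_Gnp_def by (rule sum_nonneg) (use assms in auto)

lemma prob_Gnp_disj_le:
  assumes "0 \<le> p" "p \<le> 1"
  shows "prob_Gnp n p (\<lambda>E. P E \<or> Q E) \<le> prob_Gnp n p P + prob_Gnp n p Q"
  unfolding prob_Gnp_def sum.distrib[symmetric] by (rule sum_mono) (use assms in auto)

lemma prob_Gnp_Bex_le:
  assumes "0 \<le> p" "p \<le> 1" "finite I"
  shows "prob_Gnp n p (\<lambda>E. \<exists>i\<in>I. Q i E) \<le> (\<Sum>i\<in>I. prob_Gnp n p (Q i))"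
proof -
  let ?w = "\<lambda>E. p ^ card E * (1 - p) ^ (card (all_pairs n) - card E)"
  have "prob_Gnp n p (\<lambda>E. \<exists>i\<in>I. Q i E)
      \<le> (\<Sum>E\<in>Pow (all_pairs n). \<Sum>i\<in>I. if Q i E then ?w E else 0)"
    unfolding prob_Gnp_def
  proof (rule sum_mono)
    fix E
    show "(if \<exists>i\<in>I. Q i E then ?w E else 0) \<le> (\<Sum>i\<in>I. if Q i E then ?w E else 0)"
    proof (cases "\<exists>i\<in>I. Q i E")
      case True
      then obtain i where i: "i \<in> I" "Q i E" by blast
      have "(if Q i E then ?w E else 0) \<le> (\<Sum>i\<in>I. if Q i E then ?w E else 0)"
        by (rule member_le_sum) (use i assms in auto)
      then show ?thesis using i by auto
    qed (use assms in \<open>auto intro!: sum_nonneg\<close>)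
  qed
  also have "\<dots> = (\<Sum>i\<in>I. prob_Gnp n p (Q i))"
    unfolding prob_Gnp_def by (rule sum.swap)
  finally show ?thesis .
qed

lemma prob_Gnp_disjoint:
  assumes "F \<subseteq> all_pairs n"
  shows "prob_Gnp n p (\<lambda>E. E \<inter> F = {}) = (1 - p) ^ card F"
proof -
  let ?P = "all_pairs n"
  have fin: "finite ?P" by (rule finite_all_pairs)
  have card_F: "card F \<le> card ?P" "card (?P - F) = card ?P - card F"
    using assms fin by (auto simp: card_mono card_Diff_subset finite_subset)
  have "prob_Gnp n p (\<lambda>E. E \<inter> F = {})
      = (\<Sum>E\<in>{E \<in> Pow ?P. E \<inter> F = {}}. p ^ card E * (1 - p) ^ (card ?P - card E))"
    unfolding prob_Gnp_def by (rule sum.inter_filter[symmetric]) (simp add: fin)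
  also have "{E \<in> Pow ?P. E \<inter> F = {}} = Pow (?P - F)" by auto
  also have "(\<Sum>E\<in>Pow (?P - F). p ^ card E * (1 - p) ^ (card ?P - card E))
      = (\<Sum>E\<in>Pow (?P - F). (1 - p) ^ card F * (p ^ card E * (1 - p) ^ (card (?P - F) - card E)))"
  proof (rule sum.cong)
    fix E assume "E \<in> Pow (?P - F)"
    then have "card E \<le> card (?P - F)" using fin by (simp add: card_mono)
    then have "card ?P - card E = card F + (card (?P - F) - card E)" using card_F by linarith
    then show "p ^ card E * (1 - p) ^ (card ?P - card E)
        = (1 - p) ^ card F * (p ^ card E * (1 - p) ^ (card (?P - F) - card E))"
      by (simp add: power_add)
  qed simp
  also have "\<dots> = (1 - p) ^ card F"
    by (simp add: sum_distrib_left[symmetric] sum_Pow_binomial_weights fin)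
  finally show ?thesis .
qed

subsection \<open>Pairs of vertex sets spanning no edge\<close>

definition edges_between :: "nat set \<Rightarrow> nat set \<Rightarrow> nat set set" where
  "edges_between X Y = (\<lambda>(x, y). {x, y}) ` (X \<times> Y)"

lemma edges_between_subset_all_pairs:
  assumes "X \<subseteq> {0..<n}" "Y \<subseteq> {0..<n}" "X \<inter> Y = {}"
  shows "edges_between X Y \<subseteq> all_pairs n"
  using assms unfolding edges_between_def all_pairs_def by fastforce

lemma card_edges_between:
  assumes "finite X" "finite Y" "X \<inter> Y = {}"
  shows "card (edges_between X Y) = card X * card Y"
proof -
  have "inj_on (\<lambda>(x, y). {x, y}) (X \<times> Y)"
    using assms(3) by (auto simp: inj_on_def doubleton_eq_iff)
  then show ?thesis unfolding edges_between_def by (simp add: card_image card_cartesian_product)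
qed

lemma one_minus_power_le_exp:
  fixes p :: real
  assumes "p \<le> 1"
  shows "(1 - p) ^ k \<le> exp (- p * real k)"
proof -
  have "(1 - p) ^ k \<le> exp (- p) ^ k"
    by (rule power_mono) (use assms exp_ge_add_one_self[of "- p"] in auto)
  also have "\<dots> = exp (- p * real k)" by (simp add: exp_of_nat_mult[symmetric] mult.commute)
  finally show ?thesis .
qed

lemma prob_Gnp_no_edges_between_le:
  assumes "p \<le> 1" "X \<subseteq> {0..<n}" "Y \<subseteq> {0..<n}" "X \<inter> Y = {}"
  shows "prob_Gnp n p (\<lambda>E. E \<inter> edges_between X Y = {}) \<le> exp (- p * (real (card X) * real (card Y)))"
proof -
  have "finite X" "finite Y" using assms finite_subset by blast+
  then have "prob_Gnp n p (\<lambda>E. E \<inter> edges_between X Y = {}) = (1 - p) ^ (card X * card Y)"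
    using prob_Gnp_disjoint[OF edges_between_subset_all_pairs[OF assms(2-4)]]
      card_edges_between assms(4) by simp
  also have "\<dots> \<le> exp (- p * real (card X * card Y))" by (rule one_minus_power_le_exp[OF assms(1)])
  finally show ?thesis by simp
qed

lemma prob_Gnp_some_pair_without_edges_le:
  fixes m :: real
  assumes "0 \<le> p" "p \<le> 1" "finite F"
    and pairs: "\<And>X Y. (X, Y) \<in> F \<Longrightarrow>
      X \<subseteq> {0..<n} \<and> Y \<subseteq> {0..<n} \<and> X \<inter> Y = {} \<and> m \<le> real (card X) * real (card Y)"
  shows "prob_Gnp n p (\<lambda>E. \<exists>(X, Y)\<in>F. E \<inter> edges_between X Y = {}) \<le> real (card F) * exp (- p * m)"
proof -
  have "prob_Gnp n p (\<lambda>E. \<exists>(X, Y)\<in>F. E \<inter> edges_between X Y = {})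
      \<le> (\<Sum>(X, Y)\<in>F. prob_Gnp n p (\<lambda>E. E \<inter> edges_between X Y = {}))"
    using prob_Gnp_Bex_le[OF assms(1-3), of n "\<lambda>(X, Y) E. E \<inter> edges_between X Y = {}"]
    by (simp add: case_prod_beta')
  also have "\<dots> \<le> (\<Sum>(X, Y)\<in>F. exp (- p * m))"
  proof (rule sum_mono, clarify)
    fix X Y assume "(X, Y) \<in> F"
    with pairs have XY: "X \<subseteq> {0..<n}" "Y \<subseteq> {0..<n}" "X \<inter> Y = {}"
      and m: "m \<le> real (card X) * real (card Y)" by auto
    have "exp (- p * (real (card X) * real (card Y))) \<le> exp (- p * m)"
      using mult_left_mono[OF m assms(1)] by simp
    then show "prob_Gnp n p (\<lambda>E. E \<inter> edges_between X Y = {}) \<le> exp (- p * m)"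
      using prob_Gnp_no_edges_between_le[OF assms(2) XY] by linarith
  qed
  finally show ?thesis by simp
qed

definition small_subsets :: "nat \<Rightarrow> nat \<Rightarrow> nat set set" where
  "small_subsets n k = {B. B \<subseteq> {0..<n} \<and> card B \<le> k}"

lemma finite_small_subsets: "finite (small_subsets n k)"
  unfolding small_subsets_def by (rule finite_subset[of _ "Pow {0..<n}"]) auto

text \<open>A set of at most k vertices is the set of entries of a list of length k over {0..n},
  padded with the dummy vertex n.\<close>

lemma card_small_subsets_le: "card (small_subsets n k) \<le> (n + 1) ^ k"
proof -
  let ?D = "{xs. set xs \<subseteq> {0..n} \<and> length xs = k}"
  have "small_subsets n k \<subseteq> (\<lambda>xs. set xs - {n}) ` ?D"
  proof
    fix B assume B: "B \<in> small_subsets n k"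
    then have "finite B" "n \<notin> B" "card B \<le> k" "B \<subseteq> {0..<n}"
      unfolding small_subsets_def using finite_subset by auto
    then have "sorted_list_of_set B @ replicate (k - card B) n \<in> ?D"
      and "B = set (sorted_list_of_set B @ replicate (k - card B) n) - {n}"
      by auto
    then show "B \<in> (\<lambda>xs. set xs - {n}) ` ?D" by blast
  qed
  then have "card (small_subsets n k) \<le> card ((\<lambda>xs. set xs - {n}) ` ?D)"
    by (intro card_mono finite_imageI finite_lists_length_eq) auto
  also have "\<dots> \<le> card ?D" by (rule card_image_le) (rule finite_lists_length_eq, simp)
  also have "\<dots> = (n + 1) ^ k" by (simp add: card_lists_length_eq)
  finally show ?thesis .
qed

subsection \<open>Failure of property S\<close>

text \<open>B ranges over the candidates for the neighbourhood N(A) of a set A of size a.\<close>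

definition non_neighbour_pairs :: "nat \<Rightarrow> real \<Rightarrow> nat \<Rightarrow> (nat set \<times> nat set) set" where
  "non_neighbour_pairs n s a = (\<lambda>(A, B). (A, {0..<n} - A - B)) `
     ({A \<in> small_subsets n a. card A = a} \<times> small_subsets n (nat \<lfloor>s * real a\<rfloor>))"

lemma finite_non_neighbour_pairs: "finite (non_neighbour_pairs n s a)"
  unfolding non_neighbour_pairs_def by (simp add: finite_small_subsets)

lemma card_non_neighbour_pairs_le:
  "card (non_neighbour_pairs n s a) \<le> (n + 1) ^ (a + nat \<lfloor>s * real a\<rfloor>)"
proof -
  have "card (non_neighbour_pairs n s a)
      \<le> card ({A \<in> small_subsets n a. card A = a} \<times> small_subsets n (nat \<lfloor>s * real a\<rfloor>))"
    unfolding non_neighbour_pairs_def by (rule card_image_le) (simp add: finite_small_subsets)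
  also have "\<dots> = card {A \<in> small_subsets n a. card A = a} * card (small_subsets n (nat \<lfloor>s * real a\<rfloor>))"
    by (rule card_cartesian_product)
  also have "\<dots> \<le> card (small_subsets n a) * card (small_subsets n (nat \<lfloor>s * real a\<rfloor>))"
    by (intro mult_le_mono1 card_mono finite_small_subsets) auto
  also have "\<dots> \<le> (n + 1) ^ (a + nat \<lfloor>s * real a\<rfloor>)"
    unfolding power_add by (intro mult_le_mono card_small_subsets_le)
  finally show ?thesis .
qed

lemma not_prop_S_imp_non_neighbour_pair:
  assumes "\<not> prop_S n E s g"
  shows "\<exists>a\<in>{a \<in> {1..n}. real a \<le> g}.
    \<exists>(X, Y)\<in>non_neighbour_pairs n s a. E \<inter> edges_between X Y = {}"
proof -
  obtain A where A: "A \<subseteq> {0..<n}" "real (card A) \<le> g"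
      and few: "real (card (nbhd n E A)) < s * real (card A)"
    using assms unfolding prop_S_def by (auto simp: not_le)
  let ?B = "nbhd n E A"
  have "A \<noteq> {}" using few by auto
  with A(1) have "card A \<in> {a \<in> {1..n}. real a \<le> g}"
    using A(2) card_mono[OF _ A(1)] finite_subset[OF A(1)]
    by (auto simp: Suc_le_eq card_gt_0_iff)
  moreover have "(A, {0..<n} - A - ?B) \<in> non_neighbour_pairs n s (card A)"
    unfolding non_neighbour_pairs_def small_subsets_def
    using A(1) few by (intro image_eqI[of _ _ "(A, ?B)"]) (auto simp: nbhd_def intro!: le_nat_floor)
  moreover have "E \<inter> edges_between A ({0..<n} - A - ?B) = {}"
    unfolding edges_between_def nbhd_def by auto
  ultimately show ?thesis by blast
qed

text \<open>Since s a \<le> 4n/5 and a \<le> s a / 8 \<le> n/10, at least n/10 vertices lie outside A \<union> B.\<close>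

lemma non_neighbour_pairs_card_product:
  assumes "(X, Y) \<in> non_neighbour_pairs n s a" "8 \<le> s" "s * real a \<le> 4 * real n / 5"
  shows "X \<subseteq> {0..<n} \<and> Y \<subseteq> {0..<n} \<and> X \<inter> Y = {}
    \<and> real a * real n / 10 \<le> real (card X) * real (card Y)"
proof -
  obtain B where X: "X \<subseteq> {0..<n}" "card X = a" and B: "B \<subseteq> {0..<n}" "card B \<le> nat \<lfloor>s * real a\<rfloor>"
    and Y: "Y = {0..<n} - X - B"
    using assms(1) unfolding non_neighbour_pairs_def small_subsets_def by auto
  have Y_eq: "Y = {0..<n} - (X \<union> B)" using Y by blast
  have "real (card B) \<le> real (nat \<lfloor>s * real a\<rfloor>)" using B(2) by simp
  also have "\<dots> \<le> s * real a" using assms(2) by (simp add: of_nat_nat)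
  finally have "real (card B) \<le> s * real a" .
  moreover have "8 * real a \<le> s * real a" using assms(2) by (intro mult_right_mono) auto
  moreover have "card (X \<union> B) \<le> card X + card B" by (rule card_Un_le)
  moreover have "card Y = n - card (X \<union> B)"
    unfolding Y_eq using X B by (simp add: card_Diff_subset finite_subset)
  ultimately have "real n / 10 \<le> real (card Y)" using assms(3) X(2) by linarith
  then have "real a * (real n / 10) \<le> real (card X) * real (card Y)"
    unfolding X(2) by (rule mult_left_mono) simp
  then show ?thesis using X Y by auto
qed

lemma card_power_times_exp_le:
  fixes p s :: real
  assumes "1 \<le> a" "0 \<le> s" and ln_bound: "(1 + s) * ln (real n + 1) \<le> p * real n / 20"
  shows "real ((n + 1) ^ (a + nat \<lfloor>s * real a\<rfloor>)) * exp (- p * (real a * real n / 10))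
    \<le> exp (- p * real n / 20)"
proof -
  let ?k = "a + nat \<lfloor>s * real a\<rfloor>"
  have "real ?k \<le> real a * (1 + s)" using assms(2) by (simp add: algebra_simps of_nat_nat)
  then have "real ?k * ln (real n + 1) \<le> real a * (1 + s) * ln (real n + 1)"
    by (intro mult_right_mono) simp_all
  also have "\<dots> \<le> real a * (p * real n / 20)"
    unfolding mult.assoc using ln_bound by (intro mult_left_mono) simp_all
  finally have k: "real ?k * ln (real n + 1) \<le> real a * (p * real n / 20)" .
  have "0 \<le> (1 + s) * ln (real n + 1)" using assms(2) by simp
  then have "p * real n / 20 \<le> real a * (p * real n / 20)"
    using ln_bound assms(1) mult_right_mono[of 1 "real a" "p * real n / 20"] by simp
  with k have exponent: "real ?k * ln (real n + 1) - p * (real a * real n / 10) \<le> - p * real n / 20"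
    by (simp add: field_simps)
  have "real ((n + 1) ^ ?k) = exp (real ?k * ln (real n + 1))"
    using exp_of_nat_mult[of ?k "ln (real n + 1)"] by (simp add: add.commute)
  then have "real ((n + 1) ^ ?k) * exp (- p * (real a * real n / 10))
      = exp (real ?k * ln (real n + 1) - p * (real a * real n / 10))"
    by (simp add: mult_exp_exp)
  also have "\<dots> \<le> exp (- p * real n / 20)" using exponent by simp
  finally show ?thesis .
qed

lemma prob_Gnp_not_prop_S_le:
  fixes p s g :: real
  assumes p: "0 \<le> p" "p \<le> 1" and "8 \<le> s" "g \<le> 4 * real n / (5 * s)"
    and ln_bound: "(1 + s) * ln (real n + 1) \<le> p * real n / 20"
  shows "prob_Gnp n p (\<lambda>E. \<not> prop_S n E s g) \<le> real n * exp (- p * real n / 20)"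
proof -
  let ?I = "{a \<in> {1..n}. real a \<le> g}"
  let ?Q = "\<lambda>a E. \<exists>(X, Y)\<in>non_neighbour_pairs n s a. E \<inter> edges_between X Y = {}"
  have "prob_Gnp n p (\<lambda>E. \<not> prop_S n E s g) \<le> prob_Gnp n p (\<lambda>E. \<exists>a\<in>?I. ?Q a E)"
    by (rule prob_Gnp_mono[OF p]) (rule not_prop_S_imp_non_neighbour_pair)
  also have "\<dots> \<le> (\<Sum>a\<in>?I. prob_Gnp n p (?Q a))" by (rule prob_Gnp_Bex_le[OF p]) auto
  also have "\<dots> \<le> (\<Sum>a\<in>?I. exp (- p * real n / 20))"
  proof (rule sum_mono)
    fix a assume a: "a \<in> ?I"
    have "s * real a \<le> s * (4 * real n / (5 * s))"
      using a assms(3,4) by (intro mult_left_mono) auto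
    then have "s * real a \<le> 4 * real n / 5" using assms(3) by simp
    then have "prob_Gnp n p (?Q a)
        \<le> real (card (non_neighbour_pairs n s a)) * exp (- p * (real a * real n / 10))"
      using non_neighbour_pairs_card_product assms(3)
      by (intro prob_Gnp_some_pair_without_edges_le[OF p finite_non_neighbour_pairs]) auto
    also have "\<dots> \<le> real ((n + 1) ^ (a + nat \<lfloor>s * real a\<rfloor>)) * exp (- p * (real a * real n / 10))"
      using card_non_neighbour_pairs_le by (intro mult_right_mono) (simp_all only: of_nat_le_iff exp_ge_zero)
    also have "\<dots> \<le> exp (- p * real n / 20)"
      using a assms(3) by (intro card_power_times_exp_le ln_bound) auto
    finally show "prob_Gnp n p (?Q a) \<le> exp (- p * real n / 20)" .
  qed
  also have "\<dots> = real (card ?I) * exp (- p * real n / 20)" by simp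
  also have "\<dots> \<le> real n * exp (- p * real n / 20)"
  proof -
    have "card ?I \<le> card {1..n}" by (rule card_mono) auto
    then show ?thesis by (intro mult_right_mono) auto
  qed
  finally show ?thesis .
qed

subsection \<open>Failure of property L\<close>

lemma prob_Gnp_not_prop_L_le:
  fixes p l :: real
  assumes p: "0 \<le> p" "p \<le> 1" and "0 < l"
  shows "prob_Gnp n p (\<lambda>E. \<not> prop_L n E l) \<le> 4 ^ n * exp (- p * l\<^sup>2)"
proof -
  define F where "F = {(X, Y). X \<subseteq> {0..<n} \<and> Y \<subseteq> {0..<n} \<and> X \<inter> Y = {}
    \<and> l \<le> real (card X) \<and> l \<le> real (card Y)}"
  have F_sub: "F \<subseteq> Pow {0..<n} \<times> Pow {0..<n}" unfolding F_def by auto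
  have "card F \<le> card (Pow {0..<n} \<times> Pow {0..<n})"
    by (rule card_mono[OF _ F_sub]) auto
  also have "\<dots> = 4 ^ n" by (simp add: card_cartesian_product card_Pow flip: power_mult_distrib)
  finally have card_F: "real (card F) \<le> 4 ^ n" by (metis of_nat_le_iff of_nat_numeral of_nat_power)
  have "prob_Gnp n p (\<lambda>E. \<not> prop_L n E l)
      \<le> prob_Gnp n p (\<lambda>E. \<exists>(X, Y)\<in>F. E \<inter> edges_between X Y = {})"
  proof (rule prob_Gnp_mono[OF p])
    fix E assume "\<not> prop_L n E l"
    then obtain X Y where "X \<subseteq> {0..<n}" "Y \<subseteq> {0..<n}" "X \<inter> Y = {}"
        "l \<le> real (card X)" "l \<le> real (card Y)" and no_edge: "\<not> (\<exists>x\<in>X. \<exists>y\<in>Y. {x, y} \<in> E)"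
      unfolding prop_L_def by blast
    then have "(X, Y) \<in> F" unfolding F_def by simp
    moreover have "E \<inter> edges_between X Y = {}" using no_edge unfolding edges_between_def by auto
    ultimately show "\<exists>(X, Y)\<in>F. E \<inter> edges_between X Y = {}" by (intro bexI[of _ "(X, Y)"]) simp_all
  qed
  also have "\<dots> \<le> real (card F) * exp (- p * l\<^sup>2)"
  proof (rule prob_Gnp_some_pair_without_edges_le[OF p finite_subset[OF F_sub]])
    fix X Y assume "(X, Y) \<in> F"
    then show "X \<subseteq> {0..<n} \<and> Y \<subseteq> {0..<n} \<and> X \<inter> Y = {} \<and> l\<^sup>2 \<le> real (card X) * real (card Y)"
      unfolding F_def power2_eq_square using \<open>0 < l\<close> by (auto intro: mult_mono)
  qed auto
  also have "\<dots> \<le> 4 ^ n * exp (- p * l\<^sup>2)" using card_F by (intro mult_right_mono) auto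
  finally show ?thesis .
qed

lemma expander_S_bound_le:
  fixes x s :: real
  assumes "1 < x" "0 < s" "s ^ 5 \<le> x"
  shows "4 * x * ln s / (s * ln x) \<le> 4 * x / (5 * s)"
proof -
  have "5 * ln s \<le> ln x"
    using assms ln_mono[of "s ^ 5" x] by (simp add: ln_realpow)
  then have "4 * x * ln s \<le> 4 * x * (ln x / 5)" using assms(1) by (intro mult_left_mono) auto
  then show ?thesis using assms(1,2) by (simp add: divide_right_mono field_simps)
qed

lemma expander_L_bound_ge:
  fixes x s \<alpha> :: real
  assumes "1 < x" "0 < s" "x powr \<alpha> \<le> s ^ 5"
  shows "\<alpha> * x / 15000 \<le> x * ln s / (3000 * ln x)"
proof -
  have "\<alpha> * ln x \<le> 5 * ln s"
    using assms ln_mono[of "x powr \<alpha>" "s ^ 5"] by (simp add: ln_realpow ln_powr)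
  then have "x * (\<alpha> * ln x) \<le> x * (5 * ln s)" using assms(1) by (intro mult_left_mono) auto
  then show ?thesis using assms(1) by (simp add: field_simps)
qed

lemma prob_Gnp_not_expander_le:
  fixes \<alpha> q :: real and n :: nat
  assumes "0 < \<alpha>" "2 \<le> n" "real n powr (\<alpha> - 1) \<le> q" "q \<le> 1"
    and large: "8 ^ 5 \<le> real n powr \<alpha>" "40 * ln (real n + 1) \<le> real n powr (4 * \<alpha> / 5)"
  shows "prob_Gnp n q (\<lambda>E. \<not> is_expander n E (root 5 (real n * q)))
    \<le> real n * exp (- (real n powr \<alpha>) / 20) + 4 ^ n * exp (- (\<alpha> / 15000)\<^sup>2 * real n powr (1 + \<alpha>))"
proof -
  define s where "s = root 5 (real n * q)"
  define g where "g = 4 * real n * ln s / (s * ln (real n))"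
  define l where "l = real n * ln s / (3000 * ln (real n))"
  have n2: "2 \<le> real n" using assms(2) by simp
  have "0 < real n powr (\<alpha> - 1)" using assms(2) by simp
  then have q_pos: "0 < q" using assms(3) by linarith
  then have q: "0 \<le> q" "q \<le> 1" using assms(4) by auto
  have n_powr: "real n powr \<alpha> = real n * real n powr (\<alpha> - 1)" using n2 by (simp add: powr_mult_base)
  have s5: "s ^ 5 = real n * q" unfolding s_def using n2 q_pos by simp
  have s0: "0 < s" unfolding s_def using n2 q_pos by simp
  have s5_lower: "real n powr \<alpha> \<le> s ^ 5"
    unfolding s5 n_powr using assms(3) n2 by (intro mult_left_mono) simp_all
  have s5_upper: "s ^ 5 \<le> real n" using q n2 by (simp add: s5)
  have "8 ^ 5 \<le> s ^ 5" using large(1) s5_lower by simp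
  then have s8: "8 \<le> s" using s0 power_mono_iff[of 8 s 5] by simp
  define t where "t = real n powr (\<alpha> / 5)"
  have "t ^ 5 \<le> s ^ 5" using s5_lower n2 by (simp add: t_def powr_power)
  then have "t \<le> s" using s0 power_mono_iff[of t s 5] by (simp add: t_def)
  then have "real n powr (4 * \<alpha> / 5) \<le> s ^ 4" using power_mono[of t s 4] n2 by (simp add: t_def powr_power)
  then have ln_le: "ln (real n + 1) \<le> s ^ 4 / 40" using large(2) by simp
  have "(1 + s) * ln (real n + 1) \<le> (2 * s) * (s ^ 4 / 40)"
    using s8 n2 ln_le by (intro mult_mono) auto
  also have "\<dots> = q * real n / 20" using s5 by (simp add: eval_nat_numeral)
  finally have "prob_Gnp n q (\<lambda>E. \<not> prop_S n E s g) \<le> real n * exp (- q * real n / 20)"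
    using prob_Gnp_not_prop_S_le[OF q s8 expander_S_bound_le[OF _ s0 s5_upper]] n2
    by (simp add: g_def)
  also have "\<dots> \<le> real n * exp (- (real n powr \<alpha>) / 20)"
    using s5_lower n2 by (simp add: s5 mult.commute)
  finally have S: "prob_Gnp n q (\<lambda>E. \<not> prop_S n E s g) \<le> real n * exp (- (real n powr \<alpha>) / 20)" .
  have l: "\<alpha> * real n / 15000 \<le> l"
    unfolding l_def using n2 s0 s5_lower by (intro expander_L_bound_ge) auto
  have "(\<alpha> / 15000)\<^sup>2 * real n powr (1 + \<alpha>) = real n powr (\<alpha> - 1) * (\<alpha> * real n / 15000)\<^sup>2"
    using n2 by (simp add: power2_eq_square n_powr powr_add)
  also have "\<dots> \<le> q * l\<^sup>2"
    using assms(1,3) n2 q l by (intro mult_mono power_mono) simp_all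
  finally have ql: "(\<alpha> / 15000)\<^sup>2 * real n powr (1 + \<alpha>) \<le> q * l\<^sup>2" .
  have "0 < \<alpha> * real n / 15000" using assms(1) n2 by simp
  then have "prob_Gnp n q (\<lambda>E. \<not> prop_L n E l) \<le> 4 ^ n * exp (- q * l\<^sup>2)"
    using l by (intro prob_Gnp_not_prop_L_le q) simp
  also have "\<dots> \<le> 4 ^ n * exp (- (\<alpha> / 15000)\<^sup>2 * real n powr (1 + \<alpha>))"
    using ql by simp
  finally have L: "prob_Gnp n q (\<lambda>E. \<not> prop_L n E l)
      \<le> 4 ^ n * exp (- (\<alpha> / 15000)\<^sup>2 * real n powr (1 + \<alpha>))" .
  have "(\<lambda>E. \<not> is_expander n E s) = (\<lambda>E. \<not> prop_S n E s g \<or> \<not> prop_L n E l)"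
    unfolding is_expander_def g_def l_def by simp
  then have "prob_Gnp n q (\<lambda>E. \<not> is_expander n E s)
      \<le> prob_Gnp n q (\<lambda>E. \<not> prop_S n E s g) + prob_Gnp n q (\<lambda>E. \<not> prop_L n E l)"
    by (simp only: prob_Gnp_disj_le[OF q])
  then show ?thesis using S L by (simp add: s_def)
qed

theorem lemma3p1:
  fixes \<alpha> :: real and p :: "nat \<Rightarrow> real"
  assumes "0 < \<alpha>" and "\<alpha> < 1"
    and "\<And>n. p n \<le> 1"
    and "\<And>n. p n \<ge> real n powr (\<alpha> - 1)"
  shows "(\<lambda>n. prob_Gnp n (p n) (\<lambda>E. is_expander n E (root 5 (real n * p n)))) \<longlonglongrightarrow> 1"
proof -
  have p: "0 \<le> p n" for n using order_trans[OF powr_ge_zero assms(4)] .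
  define bound where "bound n = real n * exp (- (real n powr \<alpha>) / 20)
    + 4 ^ n * exp (- (\<alpha> / 15000)\<^sup>2 * real n powr (1 + \<alpha>))" for n
  have bound: "bound \<longlonglongrightarrow> 0"
    unfolding bound_def using assms(1) by (intro tendsto_add_zero) real_asymp+
  have "eventually (\<lambda>n. 2 \<le> n \<and> 8 ^ 5 \<le> real n powr \<alpha>
      \<and> 40 * ln (real n + 1) \<le> real n powr (4 * \<alpha> / 5)) sequentially"
    using assms(1) by (intro eventually_conj eventually_ge_at_top) real_asymp+
  then have fail_le_bound: "eventually (\<lambda>n.
      prob_Gnp n (p n) (\<lambda>E. \<not> is_expander n E (root 5 (real n * p n))) \<le> bound n) sequentially"
    unfolding bound_def by eventually_elim (use prob_Gnp_not_expander_le assms in blast)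
  have "(\<lambda>n. prob_Gnp n (p n) (\<lambda>E. \<not> is_expander n E (root 5 (real n * p n)))) \<longlonglongrightarrow> 0"
  proof (rule tendsto_sandwich[OF _ fail_le_bound tendsto_const bound])
    show "eventually (\<lambda>n. 0 \<le> prob_Gnp n (p n) (\<lambda>E. \<not> is_expander n E (root 5 (real n * p n))))
      sequentially"
      using prob_Gnp_nonneg[OF p assms(3)] by simp
  qed
  then have "(\<lambda>n. 1 - (1 - prob_Gnp n (p n) (\<lambda>E. is_expander n E (root 5 (real n * p n))))) \<longlonglongrightarrow> 1 - 0"
    unfolding prob_Gnp_not by (intro tendsto_diff tendsto_const)
  then show ?thesis by simp
qed

end
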